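(* For $\epsilon>0$ and $\Delta\in\mathbb{R}$ let $\mathrm{LB}(\alpha,\epsilon,\Delta):=\alpha\Delta+\alpha\int_{\alpha}^{1}\frac{1-t}{t(1-t)+\epsilon}\,dt+(1-\alpha)\int_{0}^{\alpha}\frac{t}{t(1-t)+\epsilon}\,dt$ for $\alpha\in[0,1]$, and $$\alpha^{*}_{\mathrm{approx}}(\epsilon,\Delta):=\frac{1-\sqrt{1+4\epsilon}}{2}+\frac{\sqrt{1+4\epsilon}}{1+e^{-\sqrt{1+4\epsilon}\,\Delta}}.$$ Then the maximizer of $\mathrm{LB}(\cdot,\epsilon,\Delta)$ over $\alpha\in[0,1]$ equals $\alpha^{*}_{\mathrm{approx}}(\epsilon,\Delta)$ if and only if $|\Delta|\le \frac{1}{\sqrt{1+4\epsilon}}\log\frac{(\sqrt{1+4\epsilon}+1)^2}{4\epsilon}$. Moreover, $\frac{1}{\sqrt{1+4\epsilon}}\log\frac{(\sqrt{1+4\epsilon}+1)^2}{4\epsilon}=-\log\epsilon+O(\epsilon\log\epsilon)$ as $\epsilon\to0^{+}$. *)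

theory Defs
  imports "HOL-Analysis.Analysis" "HOL-Library.Landau_Symbols"
begin

definition LB :: "real \<Rightarrow> real \<Rightarrow> real \<Rightarrow> real" where
  "LB \<alpha> \<epsilon> \<Delta> =
     \<alpha> * \<Delta>
     + \<alpha> * integral {\<alpha>..1} (\<lambda>t. (1 - t) / (t * (1 - t) + \<epsilon>))
     + (1 - \<alpha>) * integral {0..\<alpha>} (\<lambda>t. t / (t * (1 - t) + \<epsilon>))"

definition alpha_approx :: "real \<Rightarrow> real \<Rightarrow> real" where
  "alpha_approx \<epsilon> \<Delta> =
     (1 - sqrt (1 + 4 * \<epsilon>)) / 2
     + sqrt (1 + 4 * \<epsilon>) / (1 + exp (- sqrt (1 + 4 * \<epsilon>) * \<Delta>))"

definition threshold :: "real \<Rightarrow> real" where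
  "threshold \<epsilon> =
     (1 / sqrt (1 + 4 * \<epsilon>)) * ln ((sqrt (1 + 4 * \<epsilon>) + 1)^2 / (4 * \<epsilon>))"

end

theory Submission
  imports Defs "HOL-Real_Asymp.Real_Asymp"
begin

(* Put r = sqrt (1 + 4 eps). The quadratic q(t) = t (1 - t) + eps has the roots (1 - r)/2 < 0 and
   (1 + r)/2 > 1, and between them L(t) = (ln (r - 1 + 2 t) - ln (r + 1 - 2 t)) / r is a strictly
   increasing primitive of 1/q. Evaluating both integrals with primitives built from L and ln q
   shows that LB(., eps, Delta) has derivative Delta - L(alpha) on [0, 1]. Solving L(alpha) = Delta
   gives exactly alpha_approx(eps, Delta), so the derivative is positive to its left and negative
   to its right, and alpha_approx is the unique maximiser as soon as it lies in [0, 1]; otherwise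
   it cannot be the maximiser, which always lies in [0, 1]. Finally L(1) = -L(0) = threshold eps,
   so monotonicity of L turns "alpha_approx in [0, 1]" into |Delta| <= threshold eps. *)

lemma arg_max_cong:
  assumes "\<And>x. P x \<Longrightarrow> f x = g x"
  shows "arg_max f P = arg_max g P"
proof -
  have "is_arg_max f P = is_arg_max g P"
    using assms by (auto simp: is_arg_max_def fun_eq_iff)
  then show ?thesis by (simp add: arg_max_def)
qed

lemma arg_max_eqI:
  fixes f :: "'a \<Rightarrow> 'b::linorder"
  assumes "P c" "\<And>y. P y \<Longrightarrow> y \<noteq> c \<Longrightarrow> f y < f c"
  shows "arg_max f P = c"
  unfolding arg_max_def
proof (rule some_equality)
  show "is_arg_max f P c"
    using assms by (metis is_arg_max_def less_asym less_irrefl)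
next
  fix x assume "is_arg_max f P x"
  then show "x = c" using assms unfolding is_arg_max_def by blast
qed

lemma arg_max_mem_compact:
  fixes f :: "'a::topological_space \<Rightarrow> 'b::linorder_topology"
  assumes "compact S" "S \<noteq> {}" "continuous_on S f"
  shows "arg_max f (\<lambda>x. x \<in> S) \<in> S"
proof -
  obtain x where "x \<in> S" "\<forall>y\<in>S. f y \<le> f x"
    using continuous_attains_sup[OF assms] by blast
  then show ?thesis by (intro arg_maxI[where Q = "\<lambda>x. x \<in> S"]) (auto simp: not_less)
qed

lemma strict_max_of_DERIV_sign_change:
  fixes f f' :: "real \<Rightarrow> real"
  assumes "continuous_on {a..b} f" "c \<in> {a..b}"
    and "\<And>x. x \<in> {a<..<b} \<Longrightarrow> (f has_real_derivative f' x) (at x)"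
    and "\<And>x. a < x \<Longrightarrow> x < c \<Longrightarrow> f' x > 0"
    and "\<And>x. c < x \<Longrightarrow> x < b \<Longrightarrow> f' x < 0"
    and "y \<in> {a..b}" "y \<noteq> c"
  shows "f y < f c"
proof (cases "y < c")
  case True
  show ?thesis
  proof (rule DERIV_pos_imp_increasing_open[OF True])
    fix x assume x: "y < x" "x < c"
    then have "a < x" "x < b" using assms(2,6) by auto
    then show "\<exists>d. (f has_real_derivative d) (at x) \<and> d > 0"
      using assms(3,4) x by auto
  next
    show "continuous_on {y..c} f"
      using assms(1) by (rule continuous_on_subset) (use assms in auto)
  qed
next
  case False
  then have "c < y" using assms(7) by simp
  show ?thesis
  proof (rule DERIV_neg_imp_decreasing_open[OF \<open>c < y\<close>])
    fix x assume x: "c < x" "x < y"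
    then have "a < x" "x < b" using assms(2,6) by auto
    then show "\<exists>d. (f has_real_derivative d) (at x) \<and> d < 0"
      using assms(3,5) x by auto
  next
    show "continuous_on {c..y} f"
      using assms(1) by (rule continuous_on_subset) (use assms in auto)
  qed
qed

lemma integral_eq_primitive_diff:
  fixes F f :: "real \<Rightarrow> real"
  assumes "a \<le> b" "\<And>x. x \<in> {a..b} \<Longrightarrow> (F has_real_derivative f x) (at x)"
  shows "integral {a..b} f = F b - F a"
proof (rule integral_unique, rule fundamental_theorem_of_calculus)
  fix x assume "x \<in> {a..b}"
  then show "(F has_vector_derivative f x) (at x within {a..b})"
    using assms(2) has_real_derivative_iff_has_vector_derivative has_vector_derivative_at_within
    by blast
qed (fact assms(1))

abbreviation sqrt_disc :: "real \<Rightarrow> real" where "sqrt_disc \<epsilon> \<equiv> sqrt (1 + 4 * \<epsilon>)"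

abbreviation quad :: "real \<Rightarrow> real \<Rightarrow> real" where "quad \<epsilon> t \<equiv> t * (1 - t) + \<epsilon>"

lemma quad_factor:
  assumes "1 + 4 * \<epsilon> \<ge> 0"
  shows "4 * quad \<epsilon> t = (sqrt_disc \<epsilon> - 1 + 2 * t) * (sqrt_disc \<epsilon> + 1 - 2 * t)"
proof -
  have "(sqrt_disc \<epsilon>)\<^sup>2 = 1 + 4 * \<epsilon>" using assms by simp
  then show ?thesis by (simp add: algebra_simps power2_eq_square)
qed

lemma sqrt_disc_domainD:
  assumes "\<bar>2 * t - 1\<bar> < sqrt_disc \<epsilon>"
  shows "1 + 4 * \<epsilon> > 0" "sqrt_disc \<epsilon> - 1 + 2 * t > 0" "sqrt_disc \<epsilon> + 1 - 2 * t > 0"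
proof -
  have "sqrt_disc \<epsilon> > 0" using assms abs_ge_zero[of "2 * t - 1"] by linarith
  then show "1 + 4 * \<epsilon> > 0" by simp
  show "sqrt_disc \<epsilon> - 1 + 2 * t > 0" "sqrt_disc \<epsilon> + 1 - 2 * t > 0"
    using assms by auto
qed

lemma unit_interval_in_sqrt_disc_domain:
  assumes "\<epsilon> > 0" "0 \<le> t" "t \<le> 1"
  shows "\<bar>2 * t - 1\<bar> < sqrt_disc \<epsilon>"
proof -
  have "1 < sqrt_disc \<epsilon>" using assms(1) by simp
  then show ?thesis using assms(2,3) unfolding abs_less_iff by linarith
qed

lemma quad_pos:
  assumes "\<bar>2 * t - 1\<bar> < sqrt_disc \<epsilon>"
  shows "quad \<epsilon> t > 0"
proof -
  note domain = sqrt_disc_domainD[OF assms]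
  have "(sqrt_disc \<epsilon> - 1 + 2 * t) * (sqrt_disc \<epsilon> + 1 - 2 * t) > 0"
    using domain(2,3) by (rule mult_pos_pos)
  then show ?thesis using quad_factor[OF less_imp_le[OF domain(1)], of t] by simp
qed

definition inv_quad_prim :: "real \<Rightarrow> real \<Rightarrow> real" where
  "inv_quad_prim \<epsilon> t =
     (ln (sqrt_disc \<epsilon> - 1 + 2 * t) - ln (sqrt_disc \<epsilon> + 1 - 2 * t)) / sqrt_disc \<epsilon>"

lemma has_real_derivative_inv_quad_prim:
  assumes "\<bar>2 * t - 1\<bar> < sqrt_disc \<epsilon>"
  shows "(inv_quad_prim \<epsilon> has_real_derivative 1 / quad \<epsilon> t) (at t)"
proof -
  note domain = sqrt_disc_domainD[OF assms]
  define r where "r = sqrt_disc \<epsilon>"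
  have pos: "r - 1 + 2 * t > 0" "r + 1 - 2 * t > 0" using domain by (simp_all add: r_def)
  then have "r > 0" by simp
  have factor: "4 * quad \<epsilon> t = (r - 1 + 2 * t) * (r + 1 - 2 * t)"
    unfolding r_def using domain(1) by (intro quad_factor) simp
  have "(inv_quad_prim \<epsilon> has_real_derivative
          (2 / (r - 1 + 2 * t) - (- 2) / (r + 1 - 2 * t)) / r) (at t)"
    unfolding inv_quad_prim_def[abs_def] r_def[symmetric] using pos
    by (auto intro!: derivative_eq_intros)
  moreover have "(2 / (r - 1 + 2 * t) - (- 2) / (r + 1 - 2 * t)) / r = 1 / quad \<epsilon> t"
  proof -
    have "2 / (r - 1 + 2 * t) - (- 2) / (r + 1 - 2 * t)
        = 2 * ((r - 1 + 2 * t) + (r + 1 - 2 * t)) / ((r - 1 + 2 * t) * (r + 1 - 2 * t))"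
      using pos by (simp add: field_simps)
    also have "\<dots> = (4 * r) / (4 * quad \<epsilon> t)" unfolding factor by simp
    also have "\<dots> = r / quad \<epsilon> t" by (rule mult_divide_mult_cancel_left) simp
    finally show ?thesis using \<open>r > 0\<close> by simp
  qed
  ultimately show ?thesis by simp
qed

lemma strict_mono_on_inv_quad_prim:
  "strict_mono_on {t. \<bar>2 * t - 1\<bar> < sqrt_disc \<epsilon>} (inv_quad_prim \<epsilon>)"
proof (rule strict_mono_onI)
  fix x y
  assume x: "x \<in> {t. \<bar>2 * t - 1\<bar> < sqrt_disc \<epsilon>}" and y: "y \<in> {t. \<bar>2 * t - 1\<bar> < sqrt_disc \<epsilon>}"
    and "x < y"
  note dx = sqrt_disc_domainD[OF x[simplified]] and dy = sqrt_disc_domainD[OF y[simplified]]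
  have "ln (sqrt_disc \<epsilon> - 1 + 2 * x) < ln (sqrt_disc \<epsilon> - 1 + 2 * y)"
    "ln (sqrt_disc \<epsilon> + 1 - 2 * y) < ln (sqrt_disc \<epsilon> + 1 - 2 * x)"
    using dx dy \<open>x < y\<close> by simp_all
  moreover have "sqrt_disc \<epsilon> > 0" using dx(1) by simp
  ultimately show "inv_quad_prim \<epsilon> x < inv_quad_prim \<epsilon> y"
    unfolding inv_quad_prim_def by (simp add: divide_strict_right_mono)
qed

lemma inv_quad_prim_reflect: "inv_quad_prim \<epsilon> (1 - t) = - inv_quad_prim \<epsilon> t"
  unfolding inv_quad_prim_def by (simp add: algebra_simps minus_divide_left)

lemma inv_quad_prim_one:
  assumes "\<epsilon> > 0"
  shows "inv_quad_prim \<epsilon> 1 = threshold \<epsilon>"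
proof -
  define r where "r = sqrt_disc \<epsilon>"
  have r: "r > 1" using assms by (simp add: r_def)
  have "4 * \<epsilon> = (r - 1) * (r + 1)" using assms by (simp add: r_def algebra_simps)
  then have "(r + 1)\<^sup>2 / (4 * \<epsilon>) = (r + 1) / (r - 1)" using r by (simp add: power2_eq_square)
  then have "threshold \<epsilon> = (ln (r + 1) - ln (r - 1)) / r"
    using r by (simp add: threshold_def r_def[symmetric] ln_div)
  then show ?thesis by (simp add: inv_quad_prim_def r_def[symmetric] add.commute)
qed

lemma alpha_approx_inv_quad_prim:
  assumes "1 + 4 * \<epsilon> > 0"
  shows "\<bar>2 * alpha_approx \<epsilon> \<Delta> - 1\<bar> < sqrt_disc \<epsilon>"
    and "inv_quad_prim \<epsilon> (alpha_approx \<epsilon> \<Delta>) = \<Delta>"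
proof -
  define r where "r = sqrt_disc \<epsilon>"
  define E where "E = exp (- r * \<Delta>)"
  have r: "r > 0" using assms by (simp add: r_def)
  have E: "E > 0" by (simp add: E_def)
  have alpha: "alpha_approx \<epsilon> \<Delta> = (1 - r) / 2 + r / (1 + E)"
    by (simp add: alpha_approx_def r_def E_def)
  have lower: "r - 1 + 2 * alpha_approx \<epsilon> \<Delta> = 2 * r / (1 + E)"
    and upper: "r + 1 - 2 * alpha_approx \<epsilon> \<Delta> = 2 * r / (1 + E) * E"
    using E unfolding alpha by (simp_all add: field_simps)
  have pos: "2 * r / (1 + E) > 0" "2 * r / (1 + E) * E > 0" using r E by simp_all
  then show "\<bar>2 * alpha_approx \<epsilon> \<Delta> - 1\<bar> < sqrt_disc \<epsilon>"
    using lower upper unfolding r_def abs_less_iff by linarith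
  have "ln (2 * r / (1 + E) * E) = ln (2 * r / (1 + E)) + ln E"
    using pos E r by (subst ln_mult) simp
  then show "inv_quad_prim \<epsilon> (alpha_approx \<epsilon> \<Delta>) = \<Delta>"
    using r by (simp add: inv_quad_prim_def r_def[symmetric] lower upper E_def)
qed

lemma inv_quad_prim_less_iff:
  assumes "\<bar>2 * t - 1\<bar> < sqrt_disc \<epsilon>"
  shows "inv_quad_prim \<epsilon> t < \<Delta> \<longleftrightarrow> t < alpha_approx \<epsilon> \<Delta>"
    and "\<Delta> < inv_quad_prim \<epsilon> t \<longleftrightarrow> alpha_approx \<epsilon> \<Delta> < t"
  using strict_mono_on_less[OF strict_mono_on_inv_quad_prim]
    alpha_approx_inv_quad_prim[OF sqrt_disc_domainD(1)[OF assms]] assms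
  by (metis mem_Collect_eq)+

lemma alpha_approx_mem_unit_iff:
  assumes "\<epsilon> > 0"
  shows "alpha_approx \<epsilon> \<Delta> \<in> {0..1} \<longleftrightarrow> \<bar>\<Delta>\<bar> \<le> threshold \<epsilon>"
proof -
  have "inv_quad_prim \<epsilon> 0 = - threshold \<epsilon>"
    using inv_quad_prim_reflect[of \<epsilon> 0] inv_quad_prim_one[OF assms] by simp
  then show ?thesis
    using inv_quad_prim_less_iff[OF unit_interval_in_sqrt_disc_domain[OF assms], of 0 \<Delta>]
      inv_quad_prim_less_iff[OF unit_interval_in_sqrt_disc_domain[OF assms], of 1 \<Delta>]
      inv_quad_prim_one[OF assms]
    by (auto simp: abs_le_iff not_less[symmetric])
qed

(* Since q' = 1 - 2 t, (1 - t)/q = (1/q + q'/q)/2 and t/q = (1/q - q'/q)/2. *)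
definition compl_quad_prim :: "real \<Rightarrow> real \<Rightarrow> real" where
  "compl_quad_prim \<epsilon> t = (inv_quad_prim \<epsilon> t + ln (quad \<epsilon> t)) / 2"

definition id_quad_prim :: "real \<Rightarrow> real \<Rightarrow> real" where
  "id_quad_prim \<epsilon> t = (inv_quad_prim \<epsilon> t - ln (quad \<epsilon> t)) / 2"

lemma has_real_derivative_ln_quad:
  assumes "quad \<epsilon> t > 0"
  shows "((\<lambda>t. ln (quad \<epsilon> t)) has_real_derivative (1 - 2 * t) / quad \<epsilon> t) (at t)"
  using assms by (auto intro!: derivative_eq_intros simp: algebra_simps)

lemma has_real_derivative_compl_quad_prim:
  assumes "\<bar>2 * t - 1\<bar> < sqrt_disc \<epsilon>"
  shows "(compl_quad_prim \<epsilon> has_real_derivative (1 - t) / quad \<epsilon> t) (at t)"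
    (is "(_ has_real_derivative ?E) _")
proof -
  have "(compl_quad_prim \<epsilon> has_real_derivative (1 / quad \<epsilon> t + (1 - 2 * t) / quad \<epsilon> t) / 2) (at t)"
    (is "(_ has_real_derivative ?D) _")
    unfolding compl_quad_prim_def[abs_def]
    by (intro DERIV_cdivide DERIV_add has_real_derivative_inv_quad_prim
        has_real_derivative_ln_quad quad_pos assms)
  moreover have "?D = ?E" using quad_pos[OF assms] by (simp add: field_simps)
  ultimately show ?thesis by simp
qed

lemma has_real_derivative_id_quad_prim:
  assumes "\<bar>2 * t - 1\<bar> < sqrt_disc \<epsilon>"
  shows "(id_quad_prim \<epsilon> has_real_derivative t / quad \<epsilon> t) (at t)"
    (is "(_ has_real_derivative ?E) _")
proof -
  have "(id_quad_prim \<epsilon> has_real_derivative (1 / quad \<epsilon> t - (1 - 2 * t) / quad \<epsilon> t) / 2) (at t)"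
    (is "(_ has_real_derivative ?D) _")
    unfolding id_quad_prim_def[abs_def]
    by (intro DERIV_cdivide DERIV_diff has_real_derivative_inv_quad_prim
        has_real_derivative_ln_quad quad_pos assms)
  moreover have "?D = ?E" using quad_pos[OF assms] by (simp add: field_simps)
  ultimately show ?thesis by simp
qed

definition LB_closed :: "real \<Rightarrow> real \<Rightarrow> real \<Rightarrow> real" where
  "LB_closed \<epsilon> \<Delta> \<alpha> =
     \<alpha> * \<Delta>
     + \<alpha> * (compl_quad_prim \<epsilon> 1 - compl_quad_prim \<epsilon> \<alpha>)
     + (1 - \<alpha>) * (id_quad_prim \<epsilon> \<alpha> - id_quad_prim \<epsilon> 0)"

lemma LB_eq_LB_closed:
  assumes "\<epsilon> > 0" "0 \<le> \<alpha>" "\<alpha> \<le> 1"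
  shows "LB \<alpha> \<epsilon> \<Delta> = LB_closed \<epsilon> \<Delta> \<alpha>"
proof -
  have "integral {\<alpha>..1} (\<lambda>t. (1 - t) / quad \<epsilon> t) = compl_quad_prim \<epsilon> 1 - compl_quad_prim \<epsilon> \<alpha>"
    using assms by (intro integral_eq_primitive_diff has_real_derivative_compl_quad_prim
        unit_interval_in_sqrt_disc_domain) auto
  moreover have "integral {0..\<alpha>} (\<lambda>t. t / quad \<epsilon> t) = id_quad_prim \<epsilon> \<alpha> - id_quad_prim \<epsilon> 0"
    using assms by (intro integral_eq_primitive_diff has_real_derivative_id_quad_prim
        unit_interval_in_sqrt_disc_domain) auto
  ultimately show ?thesis by (simp add: LB_def LB_closed_def)
qed

lemma has_real_derivative_LB_closed:
  assumes "\<bar>2 * \<alpha> - 1\<bar> < sqrt_disc \<epsilon>"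
  shows "(LB_closed \<epsilon> \<Delta> has_real_derivative \<Delta> - inv_quad_prim \<epsilon> \<alpha>) (at \<alpha>)"
proof -
  have "(LB_closed \<epsilon> \<Delta> has_real_derivative
          \<Delta> + (compl_quad_prim \<epsilon> 1 - compl_quad_prim \<epsilon> \<alpha>) - \<alpha> * ((1 - \<alpha>) / quad \<epsilon> \<alpha>)
          - (id_quad_prim \<epsilon> \<alpha> - id_quad_prim \<epsilon> 0) + (1 - \<alpha>) * (\<alpha> / quad \<epsilon> \<alpha>)) (at \<alpha>)"
    unfolding LB_closed_def[abs_def]
    by (rule derivative_eq_intros has_real_derivative_compl_quad_prim
        has_real_derivative_id_quad_prim assms refl | simp add: algebra_simps)+
  moreover have "compl_quad_prim \<epsilon> 1 + id_quad_prim \<epsilon> 0 = 0"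
    using inv_quad_prim_reflect[of \<epsilon> 0]
    unfolding compl_quad_prim_def id_quad_prim_def by (simp add: field_simps)
  moreover have "compl_quad_prim \<epsilon> \<alpha> + id_quad_prim \<epsilon> \<alpha> = inv_quad_prim \<epsilon> \<alpha>"
    by (simp add: compl_quad_prim_def id_quad_prim_def field_simps)
  ultimately show ?thesis by (simp add: algebra_simps)
qed

lemma arg_max_LB_closed_eq_alpha_approx_iff:
  assumes "\<epsilon> > 0"
  shows "arg_max (LB_closed \<epsilon> \<Delta>) (\<lambda>\<alpha>. \<alpha> \<in> {0..1}) = alpha_approx \<epsilon> \<Delta>
           \<longleftrightarrow> alpha_approx \<epsilon> \<Delta> \<in> {0..1}"
proof -
  note domain = unit_interval_in_sqrt_disc_domain[OF assms]
  have deriv: "(LB_closed \<epsilon> \<Delta> has_real_derivative \<Delta> - inv_quad_prim \<epsilon> t) (at t)"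
    if "t \<in> {0..1}" for t
    using that domain by (intro has_real_derivative_LB_closed) auto
  then have cont: "continuous_on {0..1} (LB_closed \<epsilon> \<Delta>)"
    by (meson DERIV_isCont continuous_at_imp_continuous_on)
  show ?thesis
  proof
    assume "arg_max (LB_closed \<epsilon> \<Delta>) (\<lambda>\<alpha>. \<alpha> \<in> {0..1}) = alpha_approx \<epsilon> \<Delta>"
    then show "alpha_approx \<epsilon> \<Delta> \<in> {0..1}"
      using arg_max_mem_compact[OF compact_Icc _ cont] by simp
  next
    assume "alpha_approx \<epsilon> \<Delta> \<in> {0..1}"
    then show "arg_max (LB_closed \<epsilon> \<Delta>) (\<lambda>\<alpha>. \<alpha> \<in> {0..1}) = alpha_approx \<epsilon> \<Delta>"
      using deriv inv_quad_prim_less_iff[OF domain]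
      by (intro arg_max_eqI strict_max_of_DERIV_sign_change[OF cont,
            where f' = "\<lambda>t. \<Delta> - inv_quad_prim \<epsilon> t"]) auto
  qed
qed

theorem lemma5:
  fixes \<epsilon> \<Delta> :: real
  assumes "\<epsilon> > 0"
  shows "(arg_max (\<lambda>\<alpha>. LB \<alpha> \<epsilon> \<Delta>) (\<lambda>\<alpha>. 0 \<le> \<alpha> \<and> \<alpha> \<le> 1) = alpha_approx \<epsilon> \<Delta>
            \<longleftrightarrow> \<bar>\<Delta>\<bar> \<le> threshold \<epsilon>)
         \<and> (\<lambda>e. threshold e - (- ln e)) \<in> O[at_right 0](\<lambda>e. e * ln e)"
proof
  have "arg_max (\<lambda>\<alpha>. LB \<alpha> \<epsilon> \<Delta>) (\<lambda>\<alpha>. \<alpha> \<in> {0..1}) = arg_max (LB_closed \<epsilon> \<Delta>) (\<lambda>\<alpha>. \<alpha> \<in> {0..1})"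
    using assms by (intro arg_max_cong) (simp add: LB_eq_LB_closed)
  then show "arg_max (\<lambda>\<alpha>. LB \<alpha> \<epsilon> \<Delta>) (\<lambda>\<alpha>. 0 \<le> \<alpha> \<and> \<alpha> \<le> 1) = alpha_approx \<epsilon> \<Delta>
      \<longleftrightarrow> \<bar>\<Delta>\<bar> \<le> threshold \<epsilon>"
    using arg_max_LB_closed_eq_alpha_approx_iff[OF assms] alpha_approx_mem_unit_iff[OF assms]
    by simp
  show "(\<lambda>e. threshold e - (- ln e)) \<in> O[at_right 0](\<lambda>e. e * ln e)"
    unfolding threshold_def by real_asymp
qed

end
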